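(* Let $d\ge 1$ and $1\le e\le d$ be integers, let $I\subset\mathbb{Z}^e$ be a finite index set with cardinality $|I|$, and let $\delta>0$. Let $$D^\delta_I:=\left\{x=(x_i)_{i\in I}\in\left([0,1]^d\right)^I:\ \Vert x_i-x_j\Vert\ge\delta \text{ whenever } i\neq j\right\},$$ where $\Vert\cdot\Vert$ is the Euclidean norm. For $x=(x_i)_{i\in I}\in([0,1]^d)^I$ and $i\in I$, let $C_i(x)$ denote the Voronoi cell $$C_i(x):=\left\{\omega\in[0,1]^d:\ \Vert x_i-\omega\Vert<\Vert x_k-\omega\Vert \text{ for all } k\neq i\right\},$$ where points $\omega$ equidistant from several nearest centroids are assigned to exactly one of the corresponding cells according to the lexicographical order on $I$ (so that $(C_i(x))_{i\in I}$ is a partition of $[0,1]^d$). Let $\lambda$ be the Lebesgue measure on $[0,1]^d$ and $E^c$ the complement of $E$ in $[0,1]^d$. For $0<\alpha<\delta/2$, $x\in D^\delta_I$ and $i\in I$, let $$U^\alpha_i(x)=\left\{\omega\in[0,1]^d:\ \exists\, y\in D^\delta_I \text{ with } y_j=x_j \text{ for all } j\neq i,\ \Vert x_i-y_i\Vert<\alpha,\ \text{and } \omega\in C_i(y)^c\cap C_i(x)\right\}.$$ Then $$\sup_{x\in D^\delta_I}\lambda\left(U^\alpha_i(x)\right)<\left(|I|-1\right)\left(\frac{2\alpha}{\delta}+\alpha\right)\left(\sqrt{2}\right)^{d-1}.$$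
   Context: $U^\alpha_i(x)$ is the set of points that leave the Voronoi cell of unit $i$ when the centroid $x_i$ alone is moved by less than $\alpha$ (staying in $D^\delta_I$). *)

theory Defs
  imports "HOL-Analysis.Analysis"
begin

text \<open>Indices in I \<subseteq> Z^e are represented as integer lists of length e;
  the lexicographical order on I is lexordp (strict lexicographic order on lists).
  Configurations x = (x_i)_{i in I} are functions from indices to points of R^d
  (values outside I are irrelevant).\<close>

definition config_space :: "int list set \<Rightarrow> real \<Rightarrow> (int list \<Rightarrow> real^'d) set" where
  "config_space I \<delta> =
     {x. (\<forall>i\<in>I. x i \<in> cbox 0 One) \<and>
         (\<forall>i\<in>I. \<forall>j\<in>I. i \<noteq> j \<longrightarrow> dist (x i) (x j) \<ge> \<delta>)}"

definition voronoi_cell :: "int list set \<Rightarrow> (int list \<Rightarrow> real^'d) \<Rightarrow> int list \<Rightarrow> (real^'d) set" where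
  "voronoi_cell I x i =
     {\<omega> \<in> cbox 0 One.
        (\<forall>k\<in>I. dist (x i) \<omega> \<le> dist (x k) \<omega>) \<and>
        (\<forall>k\<in>I. k \<noteq> i \<and> dist (x k) \<omega> = dist (x i) \<omega> \<longrightarrow> lexordp (<) i k)}"

definition U_set :: "int list set \<Rightarrow> real \<Rightarrow> real \<Rightarrow> (int list \<Rightarrow> real^'d) \<Rightarrow> int list \<Rightarrow> (real^'d) set" where
  "U_set I \<delta> \<alpha> x i =
     {\<omega> \<in> cbox 0 One. \<exists>y\<in>config_space I \<delta>.
        (\<forall>j\<in>I. j \<noteq> i \<longrightarrow> y j = x j) \<and> dist (x i) (y i) < \<alpha> \<and>
        \<omega> \<in> (cbox 0 One - voronoi_cell I y i) \<inter> voronoi_cell I x i}"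

end

theory Submission
  imports Defs
begin

text \<open>If \<open>\<omega> \<in> C\<^sub>i(x)\<close> leaves the cell when \<open>x\<^sub>i\<close> moves by less than \<open>\<alpha>\<close>, some other centroid
  \<open>x\<^sub>k\<close> satisfies \<open>\<parallel>x\<^sub>i - \<omega>\<parallel> \<le> \<parallel>x\<^sub>k - \<omega>\<parallel> < \<parallel>x\<^sub>i - \<omega>\<parallel> + \<alpha>\<close>. Since the two distances add up to at
  most \<open>2\<surd>d\<close> on the unit cube, this band lies in a slab \<open>c \<le> \<omega> \<bullet> (x\<^sub>i - x\<^sub>k) < c + \<alpha>\<surd>d\<close>; choosing a
  coordinate \<open>j\<close> with \<open>\<bar>(x\<^sub>i - x\<^sub>k)\<^sub>j\<bar> \<ge> \<delta>/\<surd>d\<close>, the slab meets the cube in volume at most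
  \<open>\<alpha>d/\<delta>\<close>. Summing over \<open>k \<noteq> i\<close> gives \<open>(|I| - 1)\<alpha>d/\<delta>\<close>, which is smaller than the claimed bound
  because \<open>d \<le> 2\<surd>2\<^bsup>d-1\<^esup>\<close>. Measurability of \<open>U\<^sup>\<alpha>\<^sub>i(x)\<close> comes from writing it through the set of
  admissible new positions of \<open>x\<^sub>i\<close>, which is \<open>\<sigma>\<close>-compact.\<close>

lemma mem_unit_cube_cart: "x \<in> cbox (0::real^'d) One \<longleftrightarrow> (\<forall>k. 0 \<le> x$k \<and> x$k \<le> 1)"
  by (simp add: mem_box_cart flip: Cart_1)

lemma dist_le_sqrt_card_unit_cube:
  fixes x y :: "real^'d"
  assumes "x \<in> cbox 0 One" "y \<in> cbox 0 One"
  shows "dist x y \<le> sqrt (real CARD('d))"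
proof -
  have "dist x y = L2_set (\<lambda>k. dist (x$k) (y$k)) UNIV" by (simp add: dist_vec_def)
  also have "\<dots> \<le> L2_set (\<lambda>k. 1) (UNIV::'d set)"
  proof (rule L2_set_mono)
    fix k
    show "dist (x$k) (y$k) \<le> 1"
      using assms by (auto simp: mem_unit_cube_cart dist_real_def abs_le_iff dest!: spec[of _ k])
  qed simp
  also have "\<dots> = sqrt (real CARD('d))" by (simp add: L2_set_constant)
  finally show ?thesis .
qed

lemma norm_le_sqrt_card_mult_component:
  fixes v :: "real^'d"
  obtains j where "norm v \<le> sqrt (real CARD('d)) * \<bar>v$j\<bar>"
proof -
  have "Max (range (\<lambda>k. \<bar>v$k\<bar>)) \<in> range (\<lambda>k. \<bar>v$k\<bar>)"
    by (rule Max_in) simp_all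
  then obtain j where j: "Max (range (\<lambda>k. \<bar>v$k\<bar>)) = \<bar>v$j\<bar>" by (erule rangeE)
  have "norm v = L2_set (\<lambda>k. \<bar>v$k\<bar>) UNIV" by (simp add: norm_vec_def L2_set_def)
  also have "\<dots> \<le> L2_set (\<lambda>k. \<bar>v$j\<bar>) (UNIV::'d set)"
    by (rule L2_set_mono) (simp_all flip: j)
  also have "\<dots> = sqrt (real CARD('d)) * \<bar>v$j\<bar>" by (simp add: L2_set_constant)
  finally show ?thesis by (rule that)
qed

lemma Suc_le_two_mult_sqrt2_power: "real n + 1 \<le> 2 * sqrt 2 ^ n"
proof (induction n rule: less_induct)
  case (less n)
  have sqrt2: "1.4 \<le> sqrt (2::real)" by (rule real_le_rsqrt) (simp add: power2_eq_square)
  show ?case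
  proof (cases "n \<le> 2")
    case True
    then consider "n = 0" | "n = 1" | "n = 2" by linarith
    then show ?thesis by cases (use sqrt2 in simp_all)
  next
    case False
    then obtain m where m: "n = Suc m" "m \<ge> 2" by (cases n) auto
    have "real n + 1 \<le> 1.4 * (real m + 1)" using m by simp
    also have "\<dots> \<le> sqrt 2 * (2 * sqrt 2 ^ m)"
      using less[of m] m sqrt2 by (intro mult_mono) auto
    also have "\<dots> = 2 * sqrt 2 ^ n" using m by simp
    finally show ?thesis .
  qed
qed

lemma emeasure_le_of_disjoint_translates:
  fixes S :: "'a::euclidean_space set"
  assumes S: "S \<in> sets lebesgue" and a: "0 \<le> a" and \<tau>: "0 \<le> \<tau>"
    and disj: "disjoint_family (\<lambda>m::nat. (+) (real m *\<^sub>R u) ` S)"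
    and bound: "\<And>N. emeasure lebesgue (\<Union>m<N. (+) (real m *\<^sub>R u) ` S) \<le> ennreal (a + real N * \<tau>)"
  shows "emeasure lebesgue S \<le> ennreal \<tau>"
proof -
  have translate: "emeasure lebesgue ((+) t ` S) = emeasure lebesgue S" for t
    using emeasure_lebesgue_affine[of 1 t S] by (simp add: ac_simps cong: image_cong_simp)
  have "emeasure lebesgue S \<le> ennreal (a + \<tau>)"
    using bound[of 1] by (simp add: lessThan_Suc)
  then obtain \<mu> where \<mu>: "emeasure lebesgue S = ennreal \<mu>" "0 \<le> \<mu>"
    by (metis ennreal_cases ennreal_less_top leD top.not_eq_extremum)
  have packing: "real N * \<mu> \<le> a + real N * \<tau>" for N
  proof -
    have "ennreal (real N * \<mu>) = (\<Sum>m<N. emeasure lebesgue ((+) (real m *\<^sub>R u) ` S))"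
      by (simp add: translate \<mu> ennreal_mult' ennreal_of_nat_eq_real_of_nat)
    also have "\<dots> = emeasure lebesgue (\<Union>m<N. (+) (real m *\<^sub>R u) ` S)"
      using S disjoint_family_on_mono[OF _ disj]
      by (intro sum_emeasure) (auto intro: lebesgue_sets_translation)
    also have "\<dots> \<le> ennreal (a + real N * \<tau>)" by (rule bound)
    finally have "ennreal (real N * \<mu>) \<le> ennreal (a + real N * \<tau>)" .
    moreover have "0 \<le> a + real N * \<tau>" using a \<tau> by simp
    ultimately show ?thesis using ennreal_le_iff by blast
  qed
  have "\<mu> \<le> \<tau>"
  proof (rule ccontr)
    assume "\<not> \<mu> \<le> \<tau>"
    moreover obtain N :: nat where "a / (\<mu> - \<tau>) < real N" using reals_Archimedean2 by blast
    ultimately have "a < real N * (\<mu> - \<tau>)" by (simp add: field_simps)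
    with packing[of N] show False by (simp add: algebra_simps)
  qed
  then show ?thesis using \<mu> by (simp add: ennreal_leI)
qed

lemma emeasure_stretched_unit_cube:
  fixes j :: "'d::finite"
  assumes "0 \<le> t"
  shows "emeasure lebesgue (cbox (0::real^'d) (\<chi> k. if k = j then 1 + t else 1)) = ennreal (1 + t)"
proof -
  let ?B = "cbox (0::real^'d) (\<chi> k. if k = j then 1 + t else 1)"
  have "?B \<noteq> {}" using assms by (auto simp: interval_eq_empty_cart)
  then have "measure lborel ?B = (\<Prod>k\<in>UNIV. if k = j then 1 + t else 1)"
    by (simp add: content_cbox_cart)
  also have "\<dots> = 1 + t" by (simp add: prod.delta)
  finally show ?thesis
    using emeasure_lborel_cbox_finite[of 0 "\<chi> k. if k = j then 1 + t else 1"]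
    by (simp add: emeasure_eq_measure2)
qed

lemma disjoint_family_slab_translates:
  fixes u v :: "'a::real_inner"
  assumes S: "S \<subseteq> {\<omega>. c \<le> \<omega> \<bullet> v \<and> \<omega> \<bullet> v < c + \<bar>u \<bullet> v\<bar>}"
  shows "disjoint_family (\<lambda>m::nat. (+) (real m *\<^sub>R u) ` S)"
proof (unfold disjoint_family_on_def, intro ballI impI, rule ccontr)
  fix m n :: nat assume "m \<noteq> n" "(+) (real m *\<^sub>R u) ` S \<inter> (+) (real n *\<^sub>R u) ` S \<noteq> {}"
  then obtain a b where ab: "a \<in> S" "b \<in> S" and "real m *\<^sub>R u + a = real n *\<^sub>R u + b"
    by auto
  then have "a - b = (real n - real m) *\<^sub>R u" by (simp add: algebra_simps)
  then have "\<bar>a \<bullet> v - b \<bullet> v\<bar> = \<bar>real n - real m\<bar> * \<bar>u \<bullet> v\<bar>"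
    by (metis abs_mult inner_diff_left inner_scaleR_left)
  moreover have "\<bar>real n - real m\<bar> \<ge> 1" using \<open>m \<noteq> n\<close> by linarith
  moreover have "\<bar>a \<bullet> v - b \<bullet> v\<bar> < \<bar>u \<bullet> v\<bar>"
    using subsetD[OF S ab(1)] subsetD[OF S ab(2)] by (simp add: abs_less_iff)
  ultimately show False by (metis abs_ge_zero mult_le_cancel_right1 not_le)
qed

text \<open>Translates of the slab by multiples of \<open>\<tau> e\<^sub>j\<close> shift \<open>\<omega> \<bullet> v\<close> by multiples of \<open>h\<close>, so they are
  disjoint, and the first \<open>N\<close> of them fit into a box of volume \<open>1 + N\<tau>\<close>.\<close>

lemma emeasure_unit_cube_slab_le:
  fixes v :: "real^'d"
  assumes vj: "v$j \<noteq> 0" and h: "0 \<le> h"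
  shows "emeasure lebesgue {\<omega> \<in> cbox 0 One. c \<le> \<omega> \<bullet> v \<and> \<omega> \<bullet> v < c + h} \<le> ennreal (h / \<bar>v$j\<bar>)"
proof -
  define S where "S = {\<omega> \<in> cbox (0::real^'d) One. c \<le> \<omega> \<bullet> v \<and> \<omega> \<bullet> v < c + h}"
  define \<tau> where "\<tau> = h / \<bar>v$j\<bar>"
  define u :: "real^'d" where "u = \<tau> *\<^sub>R axis j 1"
  have \<tau>: "0 \<le> \<tau>" "\<tau> * \<bar>v$j\<bar> = h" using vj h by (simp_all add: \<tau>_def)
  have "S \<in> sets borel" unfolding S_def by measurable
  then have S: "S \<in> sets lebesgue" by simp
  have "disjoint_family (\<lambda>m::nat. (+) (real m *\<^sub>R u) ` S)"
    using \<tau> by (intro disjoint_family_slab_translates[where c = c and v = v])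
      (auto simp: S_def u_def inner_axis' abs_mult)
  moreover have "emeasure lebesgue (\<Union>m<N. (+) (real m *\<^sub>R u) ` S) \<le> ennreal (1 + real N * \<tau>)" for N
  proof -
    have "(\<Union>m<N. (+) (real m *\<^sub>R u) ` S) \<subseteq> cbox 0 (\<chi> k. if k = j then 1 + real N * \<tau> else 1)"
    proof clarify
      fix m a assume "m < N" "a \<in> S"
      then have a01: "0 \<le> a$k \<and> a$k \<le> 1" for k by (simp add: S_def mem_unit_cube_cart)
      moreover have "real m * \<tau> \<le> real N * \<tau>" using \<open>m < N\<close> \<tau> by (simp add: mult_right_mono)
      ultimately show "real m *\<^sub>R u + a \<in> cbox 0 (\<chi> k. if k = j then 1 + real N * \<tau> else 1)"
        using \<tau> by (auto simp: u_def mem_box_cart axis_def) (use a01[of j] in linarith)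
    qed
    then have "emeasure lebesgue (\<Union>m<N. (+) (real m *\<^sub>R u) ` S)
        \<le> emeasure lebesgue (cbox (0::real^'d) (\<chi> k. if k = j then 1 + real N * \<tau> else 1))"
      by (intro emeasure_mono) auto
    also have "\<dots> = ennreal (1 + real N * \<tau>)" using \<tau> by (intro emeasure_stretched_unit_cube) simp
    finally show ?thesis .
  qed
  ultimately have "emeasure lebesgue S \<le> ennreal \<tau>"
    by (rule emeasure_le_of_disjoint_translates[OF S zero_le_one \<tau>(1)])
  then show ?thesis by (simp add: S_def \<tau>_def)
qed

lemma bisector_band_subset_slab:
  fixes a b :: "real^'d"
  assumes a: "a \<in> cbox 0 One" and b: "b \<in> cbox 0 One"
  shows "{\<omega>\<in>cbox 0 One. dist a \<omega> \<le> dist b \<omega> \<and> dist b \<omega> < dist a \<omega> + \<alpha>}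
    \<subseteq> {\<omega>\<in>cbox 0 One. (a \<bullet> a - b \<bullet> b) / 2 \<le> \<omega> \<bullet> (a - b) \<and>
         \<omega> \<bullet> (a - b) < (a \<bullet> a - b \<bullet> b) / 2 + \<alpha> * sqrt (real CARD('d))}"
proof (rule subsetI, elim CollectE conjE, intro CollectI conjI)
  fix \<omega> :: "real^'d"
  assume \<omega>: "\<omega> \<in> cbox 0 One" and le: "dist a \<omega> \<le> dist b \<omega>" and less: "dist b \<omega> < dist a \<omega> + \<alpha>"
  show "\<omega> \<in> cbox 0 One" by (fact \<omega>)
  have sq: "(dist b \<omega>)\<^sup>2 - (dist a \<omega>)\<^sup>2 = 2 * (\<omega> \<bullet> (a - b)) - (a \<bullet> a - b \<bullet> b)"
    by (simp add: dist_norm power2_norm_eq_inner inner_diff_left inner_diff_right inner_commute)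
  have "(dist a \<omega>)\<^sup>2 \<le> (dist b \<omega>)\<^sup>2" using le by (simp add: power_mono)
  then have "a \<bullet> a - b \<bullet> b \<le> 2 * (\<omega> \<bullet> (a - b))" using sq by linarith
  then show "(a \<bullet> a - b \<bullet> b) / 2 \<le> \<omega> \<bullet> (a - b)" by simp
  have "dist b \<omega> + dist a \<omega> \<le> 2 * sqrt (real CARD('d))"
    using dist_le_sqrt_card_unit_cube[OF b \<omega>] dist_le_sqrt_card_unit_cube[OF a \<omega>] by linarith
  have "(dist b \<omega>)\<^sup>2 - (dist a \<omega>)\<^sup>2 = (dist b \<omega> - dist a \<omega>) * (dist b \<omega> + dist a \<omega>)"
    by (simp add: power2_eq_square algebra_simps)
  also have "\<dots> \<le> (dist b \<omega> - dist a \<omega>) * (2 * sqrt (real CARD('d)))"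
    using le \<open>dist b \<omega> + dist a \<omega> \<le> _\<close> by (intro mult_left_mono) auto
  also have "\<dots> < \<alpha> * (2 * sqrt (real CARD('d)))"
    using less by (intro mult_strict_right_mono) auto
  finally have "2 * (\<omega> \<bullet> (a - b)) < (a \<bullet> a - b \<bullet> b) + 2 * (\<alpha> * sqrt (real CARD('d)))"
    using sq by linarith
  then show "\<omega> \<bullet> (a - b) < (a \<bullet> a - b \<bullet> b) / 2 + \<alpha> * sqrt (real CARD('d))"
    by (simp add: field_simps)
qed

lemma emeasure_bisector_band_le:
  fixes a b :: "real^'d"
  assumes a: "a \<in> cbox 0 One" and b: "b \<in> cbox 0 One" and ab: "\<delta> \<le> dist a b"
    and \<delta>: "0 < \<delta>" and \<alpha>: "0 \<le> \<alpha>"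
  shows "emeasure lebesgue {\<omega>\<in>cbox 0 One. dist a \<omega> \<le> dist b \<omega> \<and> dist b \<omega> < dist a \<omega> + \<alpha>}
    \<le> ennreal (\<alpha> * real CARD('d) / \<delta>)"
proof -
  let ?d = "sqrt (real CARD('d))"
  let ?slab = "{\<omega>\<in>cbox 0 One. (a \<bullet> a - b \<bullet> b) / 2 \<le> \<omega> \<bullet> (a - b) \<and>
    \<omega> \<bullet> (a - b) < (a \<bullet> a - b \<bullet> b) / 2 + \<alpha> * ?d}"
  obtain j where j: "norm (a - b) \<le> ?d * \<bar>(a - b)$j\<bar>"
    by (rule norm_le_sqrt_card_mult_component)
  have \<delta>_le: "\<delta> \<le> ?d * \<bar>(a - b)$j\<bar>" using ab j by (simp add: dist_norm)
  then have nz: "(a - b)$j \<noteq> 0" using \<delta> by auto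
  have "emeasure lebesgue {\<omega>\<in>cbox 0 One. dist a \<omega> \<le> dist b \<omega> \<and> dist b \<omega> < dist a \<omega> + \<alpha>}
      \<le> emeasure lebesgue ?slab"
  proof (rule emeasure_mono[OF bisector_band_subset_slab[OF a b]])
    have "?slab \<in> sets borel" by measurable
    then show "?slab \<in> sets lebesgue" by simp
  qed
  also have "\<dots> \<le> ennreal (\<alpha> * ?d / \<bar>(a - b)$j\<bar>)"
    using \<alpha> by (intro emeasure_unit_cube_slab_le nz) simp
  also have "\<alpha> * ?d / \<bar>(a - b)$j\<bar> \<le> \<alpha> * real CARD('d) / \<delta>"
  proof -
    have "\<alpha> * ?d * \<delta> \<le> \<alpha> * ?d * (?d * \<bar>(a - b)$j\<bar>)"
      using \<delta>_le \<alpha> by (intro mult_left_mono) auto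
    also have "\<dots> = \<alpha> * real CARD('d) * \<bar>(a - b)$j\<bar>"
      by (simp flip: mult.assoc)
    finally show ?thesis using nz \<delta> by (simp add: field_simps)
  qed
  finally show ?thesis by (simp add: ennreal_leI)
qed

lemma not_in_voronoi_cell_iff:
  assumes "\<omega> \<in> cbox 0 One"
  shows "\<omega> \<notin> voronoi_cell I y i \<longleftrightarrow>
    (\<exists>k\<in>I - {i}. dist (y k) \<omega> \<le> dist (y i) \<omega> \<and> (lexordp (<) i k \<longrightarrow> dist (y k) \<omega> \<noteq> dist (y i) \<omega>))"
proof
  assume "\<omega> \<notin> voronoi_cell I y i"
  then obtain k where "k \<in> I" "dist (y k) \<omega> < dist (y i) \<omega> \<or>
      (k \<noteq> i \<and> dist (y k) \<omega> = dist (y i) \<omega> \<and> \<not> lexordp (<) i k)"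
    using assms unfolding voronoi_cell_def by (auto simp: not_le)
  then show "\<exists>k\<in>I - {i}. dist (y k) \<omega> \<le> dist (y i) \<omega> \<and> (lexordp (<) i k \<longrightarrow> dist (y k) \<omega> \<noteq> dist (y i) \<omega>)"
    by (intro bexI[of _ k]) auto
next
  assume "\<exists>k\<in>I - {i}. dist (y k) \<omega> \<le> dist (y i) \<omega> \<and> (lexordp (<) i k \<longrightarrow> dist (y k) \<omega> \<noteq> dist (y i) \<omega>)"
  then obtain k where k: "k \<in> I" "k \<noteq> i" "dist (y k) \<omega> \<le> dist (y i) \<omega>"
    and lex: "lexordp (<) i k \<longrightarrow> dist (y k) \<omega> \<noteq> dist (y i) \<omega>" by blast
  show "\<omega> \<notin> voronoi_cell I y i"
  proof
    assume cell: "\<omega> \<in> voronoi_cell I y i"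
    then have "dist (y k) \<omega> = dist (y i) \<omega>" using k unfolding voronoi_cell_def by fastforce
    with cell k lex show False unfolding voronoi_cell_def by blast
  qed
qed

lemma U_set_subset_bisector_bands:
  "U_set I \<delta> \<alpha> x i \<subseteq>
    (\<Union>k\<in>I - {i}. {\<omega>\<in>cbox 0 One. dist (x i) \<omega> \<le> dist (x k) \<omega> \<and> dist (x k) \<omega> < dist (x i) \<omega> + \<alpha>})"
proof
  fix \<omega> assume "\<omega> \<in> U_set I \<delta> \<alpha> x i"
  then obtain y where \<omega>: "\<omega> \<in> cbox 0 One" and agree: "\<forall>j\<in>I. j \<noteq> i \<longrightarrow> y j = x j"
    and moved: "dist (x i) (y i) < \<alpha>" and "\<omega> \<notin> voronoi_cell I y i" and x_cell: "\<omega> \<in> voronoi_cell I x i"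
    unfolding U_set_def by auto
  then obtain k where k: "k \<in> I - {i}" and "dist (y k) \<omega> \<le> dist (y i) \<omega>"
    using not_in_voronoi_cell_iff by blast
  then have "dist (x k) \<omega> < dist (x i) \<omega> + \<alpha>"
    using agree moved dist_triangle[of "y i" \<omega> "x i"] by (auto simp: dist_commute)
  moreover have "dist (x i) \<omega> \<le> dist (x k) \<omega>" using x_cell k unfolding voronoi_cell_def by auto
  ultimately show "\<omega> \<in> (\<Union>k\<in>I - {i}. {\<omega>\<in>cbox 0 One. dist (x i) \<omega> \<le> dist (x k) \<omega> \<and> dist (x k) \<omega> < dist (x i) \<omega> + \<alpha>})"
    using k \<omega> by blast
qed

lemma emeasure_U_set_le:
  fixes x :: "int list \<Rightarrow> real^'d"
  assumes I: "finite I" and x: "x \<in> config_space I \<delta>" and i: "i \<in> I" and \<delta>: "0 < \<delta>" and \<alpha>: "0 \<le> \<alpha>"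
  shows "emeasure lebesgue (U_set I \<delta> \<alpha> x i) \<le> ennreal ((real (card I) - 1) * (\<alpha> * real CARD('d) / \<delta>))"
proof -
  define A where "A k = {\<omega>\<in>cbox 0 One. dist (x i) \<omega> \<le> dist (x k) \<omega> \<and> dist (x k) \<omega> < dist (x i) \<omega> + \<alpha>}" for k
  have A: "A k \<in> sets lebesgue" for k
  proof -
    have "A k \<in> sets borel" unfolding A_def by measurable
    then show ?thesis by simp
  qed
  have "emeasure lebesgue (U_set I \<delta> \<alpha> x i) \<le> emeasure lebesgue (\<Union>k\<in>I - {i}. A k)"
    using I A U_set_subset_bisector_bands[of I \<delta> \<alpha> x i]
    by (intro emeasure_mono) (auto simp: A_def)
  also have "\<dots> \<le> (\<Sum>k\<in>I - {i}. emeasure lebesgue (A k))"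
    using I A by (intro emeasure_subadditive_finite) auto
  also have "\<dots> \<le> (\<Sum>k\<in>I - {i}. ennreal (\<alpha> * real CARD('d) / \<delta>))"
    using x i \<delta> \<alpha> unfolding A_def config_space_def
    by (intro sum_mono emeasure_bisector_band_le) auto
  also have "\<dots> = of_nat (card (I - {i})) * ennreal (\<alpha> * real CARD('d) / \<delta>)"
    by simp
  also have "\<dots> = ennreal (real (card (I - {i})) * (\<alpha> * real CARD('d) / \<delta>))"
    unfolding ennreal_of_nat_eq_real_of_nat by (rule ennreal_mult'[symmetric]) simp
  also have "real (card (I - {i})) = real (card I) - 1"
    using I i card_gt_0_iff[of I] by (auto simp: card_Diff_singleton of_nat_diff)
  finally show ?thesis .
qed

lemma closed_Collect_ex_dist_le_compact:
  fixes K :: "'a::metric_space set"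
  assumes "compact K"
  shows "closed {\<omega>. \<exists>z\<in>K. dist a \<omega> \<le> dist z \<omega>}"
proof (unfold closed_sequential_limits, intro allI impI, elim conjE)
  fix s l
  assume "\<forall>n. s n \<in> {\<omega>. \<exists>z\<in>K. dist a \<omega> \<le> dist z \<omega>}" and s: "s \<longlonglongrightarrow> l"
  then obtain z where z: "\<And>n. z n \<in> K" and far: "\<And>n. dist a (s n) \<le> dist (z n) (s n)"
    by (auto simp: Bex_def) metis
  obtain r zz where zz: "zz \<in> K" and r: "strict_mono r" and zr: "(z \<circ> r) \<longlonglongrightarrow> zz"
    using assms z by (metis compact_imp_seq_compact seq_compactE)
  have sr: "(s \<circ> r) \<longlonglongrightarrow> l" using s r by (rule LIMSEQ_subseq_LIMSEQ)
  have "(\<lambda>n. dist a ((s \<circ> r) n)) \<longlonglongrightarrow> dist a l"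
    using sr by (intro tendsto_intros)
  moreover have "(\<lambda>n. dist ((z \<circ> r) n) ((s \<circ> r) n)) \<longlonglongrightarrow> dist zz l"
    using zr sr by (intro tendsto_intros)
  ultimately have "dist a l \<le> dist zz l"
    by (rule LIMSEQ_le) (use far in simp)
  with zz show "l \<in> {\<omega>. \<exists>z\<in>K. dist a \<omega> \<le> dist z \<omega>}" by auto
qed

text \<open>Without the strict inequality this is a union of closed half-spaces over possibly
  uncountably many \<open>z\<close>; \<open>\<sigma>\<close>-compactness turns it into a countable union of closed sets.\<close>

lemma sets_borel_Collect_ex_farther:
  fixes K :: "nat \<Rightarrow> 'a::metric_space set"
  assumes "\<And>n. compact (K n)"
  shows "{\<omega>. \<exists>z\<in>(\<Union>n. K n). dist a \<omega> \<le> dist z \<omega> \<and> (P \<longrightarrow> dist a \<omega> \<noteq> dist z \<omega>)} \<in> sets borel"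
proof (cases P)
  case True
  have "open (\<Union>z\<in>(\<Union>n. K n). {\<omega>. dist a \<omega> < dist z \<omega>})"
    by (intro open_UN ballI open_Collect_less continuous_intros)
  moreover have "{\<omega>. \<exists>z\<in>(\<Union>n. K n). dist a \<omega> \<le> dist z \<omega> \<and> (P \<longrightarrow> dist a \<omega> \<noteq> dist z \<omega>)}
      = (\<Union>z\<in>(\<Union>n. K n). {\<omega>. dist a \<omega> < dist z \<omega>})"
    using True by (auto simp: less_le)
  ultimately show ?thesis by simp
next
  case False
  have "{\<omega>. \<exists>z\<in>(\<Union>n. K n). dist a \<omega> \<le> dist z \<omega> \<and> (P \<longrightarrow> dist a \<omega> \<noteq> dist z \<omega>)}
      = (\<Union>n. {\<omega>. \<exists>z\<in>K n. dist a \<omega> \<le> dist z \<omega>})"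
    using False by auto
  also have "\<dots> \<in> sets borel"
    using assms by (intro sets.countable_nat_UN) (auto intro!: borel_closed closed_Collect_ex_dist_le_compact)
  finally show ?thesis .
qed

lemma sets_borel_voronoi_cell:
  assumes "finite I"
  shows "voronoi_cell I x i \<in> sets borel"
proof -
  have "voronoi_cell I x i = cbox 0 One \<inter> (\<Inter>k\<in>insert i I.
      {\<omega>. dist (x i) \<omega> \<le> dist (x k) \<omega> \<and> (k \<noteq> i \<and> dist (x k) \<omega> = dist (x i) \<omega> \<longrightarrow> lexordp (<) i k)})"
    unfolding voronoi_cell_def by auto
  also have "\<dots> \<in> sets borel"
    using assms by (intro sets.Int sets.finite_INT) (auto intro: borel_closed)
  finally show ?thesis .
qed

definition admissible_positions ::
    "int list set \<Rightarrow> real \<Rightarrow> real \<Rightarrow> (int list \<Rightarrow> real^'d) \<Rightarrow> int list \<Rightarrow> (real^'d) set" where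
  "admissible_positions I \<delta> \<alpha> x i =
     {z \<in> cbox 0 One. dist (x i) z < \<alpha> \<and> (\<forall>j\<in>I - {i}. \<delta> \<le> dist (x j) z)}"

lemma admissible_positions_eq_Union_compact:
  fixes x :: "int list \<Rightarrow> real^'d"
  obtains K :: "nat \<Rightarrow> (real^'d) set"
  where "\<And>n. compact (K n)" "admissible_positions I \<delta> \<alpha> x i = (\<Union>n. K n)"
proof
  let ?K = "\<lambda>n. cbox 0 One \<inter> cball (x i) (\<alpha> - 1 / real (Suc n)) \<inter> (\<Inter>j\<in>I - {i}. - ball (x j) \<delta>)"
  show "compact (?K n)" for n
    by (intro compact_Int_closed compact_cbox closed_cball closed_INT closed_Compl open_ball ballI)
  have "dist (x i) z < \<alpha> \<longleftrightarrow> (\<exists>n. dist (x i) z \<le> \<alpha> - 1 / real (Suc n))" for z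
  proof
    assume "dist (x i) z < \<alpha>"
    then obtain n where "inverse (real (Suc n)) < \<alpha> - dist (x i) z"
      using reals_Archimedean by (metis diff_gt_0_iff_gt)
    then have "dist (x i) z \<le> \<alpha> - 1 / real (Suc n)" by (simp add: inverse_eq_divide)
    then show "\<exists>n. dist (x i) z \<le> \<alpha> - 1 / real (Suc n)" ..
  next
    assume "\<exists>n. dist (x i) z \<le> \<alpha> - 1 / real (Suc n)"
    then obtain n where "dist (x i) z \<le> \<alpha> - 1 / real (Suc n)" ..
    moreover have "0 < 1 / real (Suc n)" by simp
    ultimately show "dist (x i) z < \<alpha>" by linarith
  qed
  then show "admissible_positions I \<delta> \<alpha> x i = (\<Union>n. ?K n)"
    by (simp add: admissible_positions_def not_less set_eq_iff)
qed

lemma config_space_update_iff: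
  assumes x: "x \<in> config_space I \<delta>" and i: "i \<in> I"
  shows "x(i := z) \<in> config_space I \<delta> \<longleftrightarrow> z \<in> cbox 0 One \<and> (\<forall>j\<in>I - {i}. \<delta> \<le> dist (x j) z)"
  using assms unfolding config_space_def by (auto simp: dist_commute)

lemma U_set_eq_voronoi_cell_Int:
  assumes x: "x \<in> config_space I \<delta>" and i: "i \<in> I"
  shows "U_set I \<delta> \<alpha> x i = voronoi_cell I x i \<inter> (\<Union>k\<in>I - {i}. {\<omega>. \<exists>z\<in>admissible_positions I \<delta> \<alpha> x i.
      dist (x k) \<omega> \<le> dist z \<omega> \<and> (lexordp (<) i k \<longrightarrow> dist (x k) \<omega> \<noteq> dist z \<omega>)})"
    (is "_ = _ \<inter> ?W")
proof
  show "U_set I \<delta> \<alpha> x i \<subseteq> voronoi_cell I x i \<inter> ?W"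
  proof
    fix \<omega> assume "\<omega> \<in> U_set I \<delta> \<alpha> x i"
    then obtain y where \<omega>: "\<omega> \<in> cbox 0 One" and y: "y \<in> config_space I \<delta>"
      and agree: "\<forall>j\<in>I. j \<noteq> i \<longrightarrow> y j = x j" and moved: "dist (x i) (y i) < \<alpha>"
      and "\<omega> \<notin> voronoi_cell I y i" and x_cell: "\<omega> \<in> voronoi_cell I x i"
      unfolding U_set_def by auto
    then obtain k where k: "k \<in> I - {i}" and "dist (y k) \<omega> \<le> dist (y i) \<omega>"
      and "lexordp (<) i k \<longrightarrow> dist (y k) \<omega> \<noteq> dist (y i) \<omega>"
      using not_in_voronoi_cell_iff by blast
    moreover have "y i \<in> admissible_positions I \<delta> \<alpha> x i"
      using y i agree moved unfolding admissible_positions_def config_space_def by force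
    ultimately show "\<omega> \<in> voronoi_cell I x i \<inter> ?W" using x_cell agree by auto
  qed
next
  show "voronoi_cell I x i \<inter> ?W \<subseteq> U_set I \<delta> \<alpha> x i"
  proof
    fix \<omega> assume "\<omega> \<in> voronoi_cell I x i \<inter> ?W"
    then obtain k z where x_cell: "\<omega> \<in> voronoi_cell I x i" and k: "k \<in> I - {i}"
      and z: "z \<in> admissible_positions I \<delta> \<alpha> x i" and "dist (x k) \<omega> \<le> dist z \<omega>"
      and "lexordp (<) i k \<longrightarrow> dist (x k) \<omega> \<noteq> dist z \<omega>"
      by auto
    moreover have \<omega>: "\<omega> \<in> cbox 0 One" using x_cell unfolding voronoi_cell_def by auto
    ultimately have "\<omega> \<notin> voronoi_cell I (x(i := z)) i"
      by (subst not_in_voronoi_cell_iff) auto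
    moreover have "x(i := z) \<in> config_space I \<delta>" "dist (x i) z < \<alpha>"
      using z config_space_update_iff[OF x i] unfolding admissible_positions_def by auto
    ultimately show "\<omega> \<in> U_set I \<delta> \<alpha> x i"
      using \<omega> x_cell unfolding U_set_def by (intro CollectI conjI bexI[of _ "x(i := z)"]) auto
  qed
qed

lemma U_set_lebesgue:
  fixes x :: "int list \<Rightarrow> real^'d"
  assumes "finite I" and "x \<in> config_space I \<delta>" and "i \<in> I"
  shows "U_set I \<delta> \<alpha> x i \<in> sets lebesgue"
proof -
  obtain K :: "nat \<Rightarrow> (real^'d) set"
    where "\<And>n. compact (K n)" and K: "admissible_positions I \<delta> \<alpha> x i = (\<Union>n. K n)"
    using admissible_positions_eq_Union_compact by blast
  then have "U_set I \<delta> \<alpha> x i \<in> sets borel"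
    using assms unfolding U_set_eq_voronoi_cell_Int[OF assms(2,3)] K
    by (intro sets.Int sets_borel_voronoi_cell sets.finite_UN sets_borel_Collect_ex_farther) auto
  then show ?thesis by simp
qed

theorem lemma1:
  fixes I :: "int list set" and e :: nat and \<delta> \<alpha> :: real and i :: "int list"
  assumes "finite I" and "\<forall>l\<in>I. length l = e" and "1 \<le> e" and "e \<le> CARD('d::finite)"
    and "card I \<ge> 2"
    and "\<delta> > 0" and "0 < \<alpha>" and "\<alpha> < \<delta> / 2" and "i \<in> I"
  shows "(\<forall>x\<in>(config_space I \<delta> :: (int list \<Rightarrow> real^'d) set).
            U_set I \<delta> \<alpha> x i \<in> sets lebesgue) \<and>
         (SUP x\<in>(config_space I \<delta> :: (int list \<Rightarrow> real^'d) set). emeasure lebesgue (U_set I \<delta> \<alpha> x i))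
           < ennreal ((real (card I) - 1) * (2 * \<alpha> / \<delta> + \<alpha>) * sqrt 2 ^ (CARD('d) - 1))"
proof
  note I = \<open>finite I\<close> and \<delta> = \<open>\<delta> > 0\<close> and \<alpha> = \<open>0 < \<alpha>\<close> and i = \<open>i \<in> I\<close>
  show "\<forall>x\<in>(config_space I \<delta> :: (int list \<Rightarrow> real^'d) set). U_set I \<delta> \<alpha> x i \<in> sets lebesgue"
    using U_set_lebesgue[OF I _ i] by blast
  have "real CARD('d) \<le> 2 * sqrt 2 ^ (CARD('d) - 1)"
    using Suc_le_two_mult_sqrt2_power[of "CARD('d) - 1"] by (simp add: Suc_leI of_nat_diff)
  then have "\<alpha> * real CARD('d) / \<delta> \<le> 2 * \<alpha> / \<delta> * sqrt 2 ^ (CARD('d) - 1)"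
    using \<alpha> \<delta> by (simp add: field_simps)
  also have "\<dots> < (2 * \<alpha> / \<delta> + \<alpha>) * sqrt 2 ^ (CARD('d) - 1)"
    using \<alpha> by (simp add: distrib_right)
  finally have bound_lt: "(real (card I) - 1) * (\<alpha> * real CARD('d) / \<delta>)
      < (real (card I) - 1) * (2 * \<alpha> / \<delta> + \<alpha>) * sqrt 2 ^ (CARD('d) - 1)"
    using \<open>card I \<ge> 2\<close> unfolding mult.assoc[of "real (card I) - 1"]
    by (intro mult_strict_left_mono) auto
  have "(SUP x\<in>(config_space I \<delta> :: (int list \<Rightarrow> real^'d) set). emeasure lebesgue (U_set I \<delta> \<alpha> x i))
      \<le> ennreal ((real (card I) - 1) * (\<alpha> * real CARD('d) / \<delta>))"
    using \<alpha> by (intro SUP_least emeasure_U_set_le[OF I _ i \<delta>]) auto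
  also have "\<dots> < ennreal ((real (card I) - 1) * (2 * \<alpha> / \<delta> + \<alpha>) * sqrt 2 ^ (CARD('d) - 1))"
    using bound_lt \<open>card I \<ge> 2\<close> \<alpha> \<delta> by (intro ennreal_lessI) (auto intro!: mult_pos_pos add_pos_pos)
  finally show "(SUP x\<in>(config_space I \<delta> :: (int list \<Rightarrow> real^'d) set).
      emeasure lebesgue (U_set I \<delta> \<alpha> x i))
      < ennreal ((real (card I) - 1) * (2 * \<alpha> / \<delta> + \<alpha>) * sqrt 2 ^ (CARD('d) - 1))" .
qed

end
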